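(* Let $\delta(n)=o(n)$. Then there is $n_0$ such that for all $n\ge n_0$, every $\delta(n)$-random labeled graph on $n$ nodes has diameter exactly $2$.
   Context: $C(x\mid y)$ denotes the Kolmogorov complexity of $x$ given $y$ with respect to a fixed universal Turing machine. A labeled graph $G$ on $\{1,\dots,n\}$ is encoded by the binary string $E(G)$ of length $n(n-1)/2$ whose $i$-th bit indicates presence of the $i$-th possible edge in lexicographic order. With $\mathcal G$ the set of all labeled graphs on $\{1,\dots,n\}$, $G$ is $\delta(n)$-random if $C(E(G)\mid n,\delta,\mathcal G)\ge n(n-1)/2-\delta(n)$. *)

theory Defs
  imports Main "HOL-Library.Nat_Bijection" "HOL-Library.Extended_Nat" "HOL-Library.Landau_Symbols"
begin

datatype recf = Zero | Succ | Proj nat | Comp recf "recf list" | Prim recf recf | Mn recf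

inductive ev :: "recf \<Rightarrow> nat list \<Rightarrow> nat \<Rightarrow> bool" where
  ev_Zero: "ev Zero xs 0"
| ev_Succ: "ev Succ (x # xs) (Suc x)"
| ev_Proj: "i < length xs \<Longrightarrow> ev (Proj i) xs (xs ! i)"
| ev_Comp: "list_all2 (\<lambda>g y. ev g xs y) gs ys \<Longrightarrow> ev f ys z \<Longrightarrow> ev (Comp f gs) xs z"
| ev_Prim0: "ev g xs z \<Longrightarrow> ev (Prim g h) (0 # xs) z"
| ev_PrimS: "ev (Prim g h) (k # xs) y \<Longrightarrow> ev h (k # y # xs) z \<Longrightarrow> ev (Prim g h) (Suc k # xs) z"
| ev_Mn: "ev f (z # xs) 0 \<Longrightarrow> (\<forall>y<z. \<exists>v. v \<noteq> 0 \<and> ev f (y # xs) v) \<Longrightarrow> ev (Mn f) xs z"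

text \<open>Bijective coding of binary strings as natural numbers.\<close>
fun nat_of_bl :: "bool list \<Rightarrow> nat" where
  "nat_of_bl [] = 0"
| "nat_of_bl (b # bs) = 2 * nat_of_bl bs + (if b then 2 else 1)"

definition outputs :: "recf \<Rightarrow> bool list \<Rightarrow> nat \<Rightarrow> bool list \<Rightarrow> bool" where
  "outputs M p y x \<longleftrightarrow> ev M [nat_of_bl p, y] (nat_of_bl x)"

text \<open>Every universal machine in the usual sense has this property.\<close>
definition universal :: "recf \<Rightarrow> bool" where
  "universal U \<longleftrightarrow> (\<forall>M. \<exists>c. \<forall>p y x. outputs M p y x \<longrightarrow>
      (\<exists>q. outputs U q y x \<and> length q \<le> length p + c))"

definition KC :: "recf \<Rightarrow> bool list \<Rightarrow> nat \<Rightarrow> nat" where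
  "KC U x y = (LEAST k. \<exists>p. length p = k \<and> outputs U p y x)"

definition graph_on :: "nat \<Rightarrow> nat set set \<Rightarrow> bool" where
  "graph_on n G \<longleftrightarrow> G \<subseteq> {{i, j} | i j. i \<in> {1..n} \<and> j \<in> {1..n} \<and> i \<noteq> j}"

definition edge_list :: "nat \<Rightarrow> (nat \<times> nat) list" where
  "edge_list n = [(i, j). i \<leftarrow> [1..<n+1], j \<leftarrow> [Suc i..<n+1]]"

definition E :: "nat \<Rightarrow> nat set set \<Rightarrow> bool list" where
  "E n G = map (\<lambda>(i, j). {i, j} \<in> G) (edge_list n)"

text \<open>delta-randomness; the conditional information (n, delta(n), the set of graphs on n nodes)
  is coded as the pair (n, delta n) since the set of graphs is determined by n.\<close>
definition random_graph :: "nat \<Rightarrow> (nat \<Rightarrow> nat) \<Rightarrow> recf \<Rightarrow> nat set set \<Rightarrow> bool" where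
  "random_graph n \<delta> U G \<longleftrightarrow>
     int (KC U (E n G) (prod_encode (n, \<delta> n))) \<ge> int (n * (n - 1) div 2) - int (\<delta> n)"

definition walk :: "nat \<Rightarrow> nat set set \<Rightarrow> nat list \<Rightarrow> bool" where
  "walk n G xs \<longleftrightarrow> xs \<noteq> [] \<and> set xs \<subseteq> {1..n} \<and>
     (\<forall>i. Suc i < length xs \<longrightarrow> {xs ! i, xs ! Suc i} \<in> G)"

text \<open>Graph distance (infinite if no path).\<close>
definition gdist :: "nat \<Rightarrow> nat set set \<Rightarrow> nat \<Rightarrow> nat \<Rightarrow> enat" where
  "gdist n G u v = (INF k \<in> {k. \<exists>xs. walk n G xs \<and> hd xs = u \<and> last xs = v \<and> length xs = Suc k}. enat k)"

definition diameter :: "nat \<Rightarrow> nat set set \<Rightarrow> enat" where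
  "diameter n G = (SUP u \<in> {1..n}. SUP v \<in> {1..n}. gdist n G u v)"

end

theory Submission
  imports Defs "HOL-Library.FuncSet" "HOL-Real_Asymp.Real_Asymp"
begin

(* A graph on n nodes has diameter 2 unless it is complete or two of its vertices have no common
   neighbour.  Coding graphs as numbers below 2 ^ N, N = n (n - 1) / 2, this "bad" property is
   decidable, and for a fixed pair u, v without common neighbour the n - 2 pairs of edge slots
   {u, w}, {v, w} take only 3 of their 4 values; hence there are at most
   1 + n^2 2^(N - 2 (n - 2)) 3^(n - 2) bad codes.  Given n, a bad graph is determined by its rank
   among the bad codes, so its complexity is at most N - (2 - log2 3) (n - 2) + 2 log2 n + O(1).
   As delta n = o(n), this is eventually smaller than N - delta n, contradicting randomness. *)

section \<open>Computable functions\<close>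

definition computable :: "nat \<Rightarrow> (nat list \<Rightarrow> nat) \<Rightarrow> bool" where
  "computable k f \<longleftrightarrow> (\<exists>M. \<forall>xs. length xs = k \<longrightarrow> ev M xs (f xs))"

definition decidable :: "nat \<Rightarrow> (nat list \<Rightarrow> bool) \<Rightarrow> bool" where
  "decidable k P \<longleftrightarrow> computable k (\<lambda>xs. if P xs then 1 else 0)"

lemma computable_cong:
  "computable k f \<Longrightarrow> (\<And>xs. length xs = k \<Longrightarrow> f xs = g xs) \<Longrightarrow> computable k g"
  unfolding computable_def by metis

lemma decidable_cong:
  "decidable k P \<Longrightarrow> (\<And>xs. length xs = k \<Longrightarrow> P xs = Q xs) \<Longrightarrow> decidable k Q"
  unfolding decidable_def by (erule computable_cong) simp

lemma computable_zero: "computable k (\<lambda>_. 0)"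
  unfolding computable_def by (auto intro: ev_Zero)

lemma computable_proj: "i < k \<Longrightarrow> computable k (\<lambda>xs. xs ! i)"
  unfolding computable_def by (auto intro: ev_Proj)

lemma computable_comp:
  assumes g: "computable (length fs) g" and fs: "list_all (computable k) fs"
  shows "computable k (\<lambda>xs. g (map (\<lambda>f. f xs) fs))"
proof -
  obtain Mg where Mg: "\<forall>ys. length ys = length fs \<longrightarrow> ev Mg ys (g ys)"
    using g unfolding computable_def by blast
  from fs have "\<exists>Ms. list_all2 (\<lambda>M f. \<forall>xs. length xs = k \<longrightarrow> ev M xs (f xs)) Ms fs"
  proof (induction fs)
    case (Cons f fs)
    then obtain Ms M where "list_all2 (\<lambda>M f. \<forall>xs. length xs = k \<longrightarrow> ev M xs (f xs)) Ms fs"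
      and "\<forall>xs. length xs = k \<longrightarrow> ev M xs (f xs)"
      unfolding computable_def by auto
    then show ?case by (intro exI[of _ "M # Ms"]) auto
  qed simp
  then obtain Ms where Ms: "list_all2 (\<lambda>M f. \<forall>xs. length xs = k \<longrightarrow> ev M xs (f xs)) Ms fs" ..
  show ?thesis unfolding computable_def
  proof (intro exI[of _ "Comp Mg Ms"] allI impI)
    fix xs :: "nat list" assume "length xs = k"
    have "list_all2 (\<lambda>M y. ev M xs y) Ms (map (\<lambda>f. f xs) fs)"
      unfolding list_all2_map2 using Ms by (rule list_all2_mono) (use \<open>length xs = k\<close> in auto)
    moreover have "ev Mg (map (\<lambda>f. f xs) fs) (g (map (\<lambda>f. f xs) fs))" using Mg by simp
    ultimately show "ev (Comp Mg Ms) xs (g (map (\<lambda>f. f xs) fs))" by (rule ev_Comp)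
  qed
qed

lemma computable_comp1:
  "computable 1 (\<lambda>ys. F (ys!0)) \<Longrightarrow> computable k a \<Longrightarrow> computable k (\<lambda>xs. F (a xs))"
  using computable_comp[of "[a]" "\<lambda>ys. F (ys!0)" k] by simp

lemma computable_comp2:
  "computable 2 (\<lambda>ys. F (ys!0) (ys!1)) \<Longrightarrow> computable k a \<Longrightarrow> computable k b \<Longrightarrow>
    computable k (\<lambda>xs. F (a xs) (b xs))"
  using computable_comp[of "[a, b]" "\<lambda>ys. F (ys!0) (ys!1)" k] by (simp add: numeral_2_eq_2)

lemma computable_comp3:
  "computable 3 (\<lambda>ys. F (ys!0) (ys!1) (ys!2)) \<Longrightarrow> computable k a \<Longrightarrow> computable k b \<Longrightarrow>
    computable k c \<Longrightarrow> computable k (\<lambda>xs. F (a xs) (b xs) (c xs))"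
  using computable_comp[of "[a, b, c]" "\<lambda>ys. F (ys!0) (ys!1) (ys!2)" k] by (simp add: numeral_3_eq_3)

lemma computable_subst_hd:
  assumes F: "computable (Suc k) F" and b: "computable k b"
  shows "computable k (\<lambda>xs. F (b xs # xs))"
proof -
  have "computable k (\<lambda>xs. F (map (\<lambda>f. f xs) (b # map (\<lambda>i xs. xs ! i) [0..<k])))"
    by (rule computable_comp) (use F b in \<open>auto simp: list_all_iff intro: computable_proj\<close>)
  then show ?thesis
    by (rule computable_cong) (simp add: comp_def, metis map_nth)
qed

lemma computable_tl: "computable k f \<Longrightarrow> computable (Suc k) (\<lambda>ys. f (tl ys))"
proof -
  assume f: "computable k f"
  have tl: "map (\<lambda>j. ys ! j) [Suc 0..<Suc k] = tl ys" if "length ys = Suc k" for ys :: "nat list"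
    using that by (simp add: list_eq_iff_nth_eq nth_tl del: upt_Suc)
  have "computable (length (map (\<lambda>j ys. ys ! j) [1..<Suc k])) f" using f by (simp del: upt_Suc)
  moreover have "list_all (computable (Suc k)) (map (\<lambda>j ys. ys ! j) [1..<Suc k])"
    by (auto simp: list_all_iff intro: computable_proj simp del: upt_Suc)
  ultimately have "computable (Suc k) (\<lambda>ys. f (map (\<lambda>g. g ys) (map (\<lambda>j ys. ys ! j) [1..<Suc k])))"
    by (rule computable_comp)
  then show ?thesis by (rule computable_cong) (simp add: comp_def tl del: upt_Suc)
qed

lemma computable_Suc: "computable k f \<Longrightarrow> computable k (\<lambda>xs. Suc (f xs))"
proof -
  have "computable 1 (\<lambda>ys. Suc (ys ! 0))"
    unfolding computable_def
  proof (intro exI[of _ Succ] allI impI)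
    fix ys :: "nat list" assume "length ys = 1"
    then obtain x where "ys = [x]" by (cases ys) auto
    then show "ev Succ ys (Suc (ys ! 0))" using ev_Succ[of x "[]"] by simp
  qed
  then show "computable k f \<Longrightarrow> computable k (\<lambda>xs. Suc (f xs))" by (rule computable_comp1)
qed

lemma computable_const: "computable k (\<lambda>_. c)"
  by (induction c) (auto intro: computable_zero computable_Suc)

(* Arities are passed as equations so that the rule also applies to goals whose arities are
   numerals, which do not unify with Suc k. *)
lemma computable_prim:
  assumes g: "computable k g" and h: "computable kh h" and "kh = Suc (Suc k)" "kf = Suc k"
    and f0: "\<And>xs. length xs = k \<Longrightarrow> f (0 # xs) = g xs"
    and fS: "\<And>n xs. length xs = k \<Longrightarrow> f (Suc n # xs) = h (n # f (n # xs) # xs)"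
  shows "computable kf f"
proof -
  obtain Mg where Mg: "\<forall>xs. length xs = k \<longrightarrow> ev Mg xs (g xs)"
    using g unfolding computable_def by blast
  obtain Mh where Mh: "\<forall>xs. length xs = Suc (Suc k) \<longrightarrow> ev Mh xs (h xs)"
    using h \<open>kh = Suc (Suc k)\<close> unfolding computable_def by blast
  have ev_f: "ev (Prim Mg Mh) (n # xs) (f (n # xs))" if "length xs = k" for n xs
  proof (induction n)
    case 0
    then show ?case using Mg that f0 by (auto intro: ev_Prim0)
  next
    case (Suc n)
    moreover have "ev Mh (n # f (n # xs) # xs) (h (n # f (n # xs) # xs))" using Mh that by simp
    ultimately show ?case using fS[OF that] by (auto intro: ev_PrimS)
  qed
  show ?thesis unfolding computable_def \<open>kf = Suc k\<close>
  proof (intro exI[of _ "Prim Mg Mh"] allI impI)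
    fix ys :: "nat list" assume "length ys = Suc k"
    then show "ev (Prim Mg Mh) ys (f ys)" using ev_f by (cases ys) auto
  qed
qed

lemma computable_add: "computable k f \<Longrightarrow> computable k g \<Longrightarrow> computable k (\<lambda>xs. f xs + g xs)"
proof -
  have "computable 1 (\<lambda>ys. ys!0)" and "computable 3 (\<lambda>ys. Suc (ys!1))"
    by (intro computable_Suc computable_proj; simp)+
  then have "computable 2 (\<lambda>ys. ys!0 + ys!1)"
    by (rule computable_prim) auto
  then show "computable k f \<Longrightarrow> computable k g \<Longrightarrow> computable k (\<lambda>xs. f xs + g xs)"
    by (rule computable_comp2)
qed

lemma computable_diff: "computable k f \<Longrightarrow> computable k g \<Longrightarrow> computable k (\<lambda>xs. f xs - g xs)"
proof -
  have proj: "computable 1 (\<lambda>ys. ys!0)" "computable 2 (\<lambda>ys. ys!0)" "computable 3 (\<lambda>ys. ys!1)"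
    by (rule computable_proj, simp)+
  have "computable 1 (\<lambda>ys. ys!0 - 1)"
    using computable_const[of 0 0] proj(2) by (rule computable_prim) auto
  then have "computable 3 (\<lambda>ys. ys!1 - 1)"
    using proj(3) by (rule computable_comp1)
  with proj(1) have "computable 2 (\<lambda>ys. ys!1 - ys!0)"
    by (rule computable_prim) auto
  then show "computable k f \<Longrightarrow> computable k g \<Longrightarrow> computable k (\<lambda>xs. f xs - g xs)"
    using computable_comp2[of "\<lambda>a b. b - a" k g f] by simp
qed

lemma computable_mult: "computable k f \<Longrightarrow> computable k g \<Longrightarrow> computable k (\<lambda>xs. f xs * g xs)"
proof -
  have "computable 3 (\<lambda>ys. ys!2 + ys!1)" by (intro computable_add computable_proj) auto
  then have "computable 2 (\<lambda>ys. ys!0 * ys!1)"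
    by (rule computable_prim[OF computable_const[of 1 0]]) auto
  then show "computable k f \<Longrightarrow> computable k g \<Longrightarrow> computable k (\<lambda>xs. f xs * g xs)"
    by (rule computable_comp2)
qed

lemma computable_pow2: "computable k f \<Longrightarrow> computable k (\<lambda>xs. 2 ^ f xs)"
proof -
  have "computable 2 (\<lambda>ys. ys!1 + ys!1)" by (intro computable_add computable_proj) auto
  then have "computable 1 (\<lambda>ys. 2 ^ ys!0)"
    by (rule computable_prim[OF computable_const[of 0 1]]) auto
  then show "computable k f \<Longrightarrow> computable k (\<lambda>xs. 2 ^ f xs)" by (rule computable_comp1)
qed

lemma computable_if_zero:
  "computable k c \<Longrightarrow> computable k a \<Longrightarrow> computable k b \<Longrightarrow>
    computable k (\<lambda>xs. if c xs = 0 then a xs else b xs)"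
proof -
  have "computable 2 (\<lambda>ys. ys!0)" and "computable 4 (\<lambda>ys. ys!3)"
    by (rule computable_proj, simp)+
  then have "computable 3 (\<lambda>ys. if ys!0 = 0 then ys!1 else ys!2)"
    by (rule computable_prim) auto
  then show "computable k c \<Longrightarrow> computable k a \<Longrightarrow> computable k b \<Longrightarrow>
      computable k (\<lambda>xs. if c xs = 0 then a xs else b xs)"
    by (rule computable_comp3)
qed

lemma computable_If:
  "decidable k P \<Longrightarrow> computable k a \<Longrightarrow> computable k b \<Longrightarrow>
    computable k (\<lambda>xs. if P xs then a xs else b xs)"
  unfolding decidable_def
  by (rule computable_cong[OF computable_if_zero[of k "\<lambda>xs. if P xs then 1 else 0" b a]]) auto

lemma decidable_le: "computable k f \<Longrightarrow> computable k g \<Longrightarrow> decidable k (\<lambda>xs. f xs \<le> g xs)"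
  unfolding decidable_def
  by (rule computable_cong[OF computable_if_zero[of k "\<lambda>xs. f xs - g xs" "\<lambda>_. 1" "\<lambda>_. 0"]])
    (auto intro: computable_diff computable_const)

lemma decidable_less: "computable k f \<Longrightarrow> computable k g \<Longrightarrow> decidable k (\<lambda>xs. f xs < g xs)"
  using decidable_le[of k "\<lambda>xs. Suc (f xs)" g] computable_Suc[of k f] by (simp add: Suc_le_eq)

lemma decidable_not: "decidable k P \<Longrightarrow> decidable k (\<lambda>xs. \<not> P xs)"
  unfolding decidable_def
  by (rule computable_cong[OF computable_if_zero[of k "\<lambda>xs. if P xs then 1 else 0" "\<lambda>_. 1" "\<lambda>_. 0"]])
    (auto intro: computable_const)

lemma decidable_conj: "decidable k P \<Longrightarrow> decidable k Q \<Longrightarrow> decidable k (\<lambda>xs. P xs \<and> Q xs)"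
  unfolding decidable_def
  by (rule computable_cong[OF computable_If[of k P "\<lambda>xs. if Q xs then 1 else 0" "\<lambda>_. 0"]])
    (auto intro: computable_const simp: decidable_def)

lemma decidable_disj: "decidable k P \<Longrightarrow> decidable k Q \<Longrightarrow> decidable k (\<lambda>xs. P xs \<or> Q xs)"
  using decidable_not[OF decidable_conj[OF decidable_not decidable_not]] by simp

lemma decidable_imp: "decidable k P \<Longrightarrow> decidable k Q \<Longrightarrow> decidable k (\<lambda>xs. P xs \<longrightarrow> Q xs)"
  using decidable_disj[OF decidable_not] by simp

lemma decidable_eq: "computable k f \<Longrightarrow> computable k g \<Longrightarrow> decidable k (\<lambda>xs. f xs = g xs)"
  using decidable_conj[OF decidable_le decidable_le] by (simp add: order_eq_iff)

(* Q is P read on the argument list z # xs; asking for both lets the rule match goals stated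
   with P, while Q, which cannot be found by unification, is supplied explicitly. *)
lemma computable_Least:
  assumes Q: "decidable kq Q"
    and ex: "\<And>xs. length xs = k \<Longrightarrow> \<exists>z. P z xs"
    and "kq = Suc k" and P_Q: "\<And>z xs. length xs = k \<Longrightarrow> P z xs = Q (z # xs)"
  shows "computable k (\<lambda>xs. LEAST z. P z xs)"
proof -
  have "decidable (Suc k) (\<lambda>ys. \<not> Q ys)" using decidable_not Q \<open>kq = Suc k\<close> by blast
  then obtain M where M: "\<And>ys. length ys = Suc k \<Longrightarrow> ev M ys (if \<not> Q ys then 1 else 0)"
    unfolding decidable_def computable_def by auto
  show ?thesis unfolding computable_def
  proof (intro exI[of _ "Mn M"] allI impI)
    fix xs :: "nat list" assume len: "length xs = k"
    show "ev (Mn M) xs (LEAST z. P z xs)"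
    proof (rule ev_Mn)
      have "P (LEAST z. P z xs) xs" using ex[OF len] by (rule LeastI_ex)
      then show "ev M ((LEAST z. P z xs) # xs) 0"
        using M[of "(LEAST z. P z xs) # xs"] len P_Q by simp
      show "\<forall>y<LEAST z. P z xs. \<exists>v. v \<noteq> 0 \<and> ev M (y # xs) v"
      proof (intro allI impI)
        fix y assume "y < (LEAST z. P z xs)"
        then have "\<not> P y xs" by (rule not_less_Least)
        then show "\<exists>v. v \<noteq> 0 \<and> ev M (y # xs) v" using M[of "y # xs"] len P_Q by auto
      qed
    qed
  qed
qed

lemma computable_div: "computable k f \<Longrightarrow> computable k g \<Longrightarrow> computable k (\<lambda>xs. f xs div g xs)"
proof -
  have "computable 2 (\<lambda>xs. LEAST q. xs!1 = 0 \<or> xs!0 < Suc q * xs!1)"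
  proof (rule computable_Least[where Q = "\<lambda>ys. ys!2 = 0 \<or> ys!1 < Suc (ys!0) * ys!2"])
    show "decidable 3 (\<lambda>ys. ys!2 = 0 \<or> ys!1 < Suc (ys!0) * ys!2)"
      by (intro decidable_disj decidable_eq decidable_less computable_mult computable_Suc
          computable_proj computable_const; simp)
    show "\<exists>q. xs!1 = 0 \<or> xs!0 < Suc q * xs!1" for xs :: "nat list"
      by (rule exI[of _ "xs!0"]) (cases "xs!1"; simp)
  qed simp_all
  then have "computable 2 (\<lambda>xs. xs!0 div xs!1)"
  proof (rule computable_cong)
    fix xs :: "nat list"
    show "(LEAST q. xs!1 = 0 \<or> xs!0 < Suc q * xs!1) = xs!0 div xs!1"
    proof (cases "xs!1 = 0")
      case False
      show ?thesis
      proof (rule Least_equality)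
        show "xs!1 = 0 \<or> xs!0 < Suc (xs!0 div xs!1) * xs!1"
          using False by (simp add: dividend_less_div_times)
        fix q assume "xs!1 = 0 \<or> xs!0 < Suc q * xs!1"
        then have "xs!0 div xs!1 < Suc q" using False by (auto intro: less_mult_imp_div_less)
        then show "xs!0 div xs!1 \<le> q" by simp
      qed
    qed simp
  qed
  then show "computable k f \<Longrightarrow> computable k g \<Longrightarrow> computable k (\<lambda>xs. f xs div g xs)"
    by (rule computable_comp2)
qed

lemma computable_mod:
  assumes "computable k f" "computable k g"
  shows "computable k (\<lambda>xs. f xs mod g xs)"
proof -
  have "computable k (\<lambda>xs. f xs - g xs * (f xs div g xs))"
    by (intro computable_diff computable_mult computable_div assms)
  then show ?thesis by (rule computable_cong) (simp add: minus_mult_div_eq_mod)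
qed

lemma computable_sum:
  assumes g: "computable kg g" and b: "computable k b" and "kg = Suc k"
    and f_g: "\<And>i xs. length xs = k \<Longrightarrow> f i xs = g (i # xs)"
  shows "computable k (\<lambda>xs. \<Sum>i<b xs. f i xs)"
proof -
  have drop2: "map (\<lambda>j. ys ! Suc (Suc j)) [0..<k] = drop 2 ys" if "length ys = Suc (Suc k)"
    for ys :: "nat list"
    using that by (simp add: list_eq_iff_nth_eq)
  have "computable (Suc (Suc k))
      (\<lambda>ys. g (map (\<lambda>h. h ys) ((\<lambda>ys. ys!0) # map (\<lambda>j ys. ys ! (j + 2)) [0..<k])))"
    by (rule computable_comp) (use g \<open>kg = Suc k\<close> in \<open>auto simp: list_all_iff intro: computable_proj\<close>)
  then have "computable (Suc (Suc k)) (\<lambda>ys. g (ys!0 # drop 2 ys))"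
    by (rule computable_cong) (simp add: comp_def drop2)
  then have "computable (Suc (Suc k)) (\<lambda>ys. ys!1 + g (ys!0 # drop 2 ys))"
    by (intro computable_add computable_proj) simp
  then have "computable (Suc k) (\<lambda>ys. \<Sum>i<hd ys. g (i # tl ys))"
    by (rule computable_prim[OF computable_const]) auto
  from computable_subst_hd[OF this b] show ?thesis
    by (rule computable_cong) (simp add: f_g)
qed

lemma decidable_bex:
  assumes Q: "decidable kq Q" and b: "computable k b" and "kq = Suc k"
    and P_Q: "\<And>i xs. length xs = k \<Longrightarrow> P i xs = Q (i # xs)"
  shows "decidable k (\<lambda>xs. \<exists>i<b xs. P i xs)"
proof -
  have pos: "0 < (\<Sum>i<n. if P i xs then 1 else 0 :: nat) \<longleftrightarrow> (\<exists>i<n. P i xs)" for n xs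
    by (induction n) (auto simp: less_Suc_eq)
  have "computable k (\<lambda>xs. \<Sum>i<b xs. if P i xs then 1 else 0)"
    by (rule computable_sum[OF Q[unfolded decidable_def] b \<open>kq = Suc k\<close>]) (simp add: P_Q)
  then have "decidable k (\<lambda>xs. 0 < (\<Sum>i<b xs. if P i xs then 1 else 0 :: nat))"
    by (intro decidable_less computable_const)
  then show ?thesis by (rule decidable_cong) (simp only: pos)
qed

lemma decidable_ball:
  assumes Q: "decidable kq Q" and b: "computable k b" and "kq = Suc k"
    and P_Q: "\<And>i xs. length xs = k \<Longrightarrow> P i xs = Q (i # xs)"
  shows "decidable k (\<lambda>xs. \<forall>i<b xs. P i xs)"
proof -
  have "decidable k (\<lambda>xs. \<exists>i<b xs. \<not> P i xs)"
    by (rule decidable_bex[OF decidable_not[OF Q] b \<open>kq = Suc k\<close>]) (simp add: P_Q)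
  from decidable_not[OF this] show ?thesis by simp
qed

section \<open>Bit strings and their values\<close>

lemma nat_of_bl_eq_horner_sum: "nat_of_bl bs = 2 ^ length bs - 1 + horner_sum of_bool 2 bs"
proof (induction bs)
  case (Cons b bs)
  have "1 \<le> (2::nat) ^ length bs" by simp
  with Cons show ?case by (cases b; simp; linarith)
qed simp

lemma horner_sum_all_True:
  "(\<forall>k<length bs. bs ! k) \<Longrightarrow> horner_sum of_bool 2 bs = (2 ^ length bs - 1 :: nat)"
proof (induction bs)
  case (Cons b bs)
  then have "b" "\<forall>k<length bs. bs ! k" by (auto dest: spec[of _ 0] spec[of _ "Suc _"])
  moreover have "1 \<le> (2::nat) ^ length bs" by simp
  ultimately show ?case using Cons.IH by (simp; linarith)
qed simp

lemma ex_nat_of_bl_eq: "a < 2 ^ L \<Longrightarrow> \<exists>p. nat_of_bl p = a \<and> length p \<le> L"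
proof (induction L arbitrary: a)
  case (Suc L)
  show ?case
  proof (cases "a = 0")
    case False
    have "(a - 1) div 2 < 2 ^ L" using Suc.prems by simp
    then obtain p where "nat_of_bl p = (a - 1) div 2" "length p \<le> L" using Suc.IH by blast
    with False show ?thesis by (intro exI[of _ "even a # p"]) (auto elim: evenE oddE)
  qed (intro exI[of _ "[]"], simp)
qed (intro exI[of _ "[]"], simp)

lemma nat_eq_if_bits_eq:
  fixes m m' :: nat
  assumes "m < 2 ^ N" "m' < 2 ^ N" "\<forall>i<N. bit m i = bit m' i"
  shows "m = m'"
proof (rule bit_eqI)
  fix i
  have "take_bit N m = m" "take_bit N m' = m'" using assms(1,2) by (simp_all add: take_bit_nat_eq_self_iff)
  then show "bit m i \<longleftrightarrow> bit m' i" using assms(3) by (metis bit_take_bit_iff)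
qed

lemma decidable_bit: "computable k a \<Longrightarrow> computable k b \<Longrightarrow> decidable k (\<lambda>xs. bit (a xs) (b xs))"
proof -
  assume "computable k a" "computable k b"
  then have "decidable k (\<lambda>xs. a xs div 2 ^ b xs mod 2 = 1)"
    by (intro decidable_eq computable_mod computable_div computable_pow2 computable_const)
  then show ?thesis by (rule decidable_cong) (simp add: bit_iff_odd odd_iff_mod_2_eq_one)
qed

section \<open>Graphs coded by numbers\<close>

(* edge_list n first lists the n - 1 pairs (1, j), then the n - 2 pairs (2, j), and so on;
   this is the position of the pair (min u v, max u v). *)
definition edge_index :: "nat \<Rightarrow> nat \<Rightarrow> nat \<Rightarrow> nat" where
  "edge_index n u v = (\<Sum>t<min u v - 1. n - Suc t) + (max u v - min u v - 1)"

definition edges_from :: "nat \<Rightarrow> nat \<Rightarrow> (nat \<times> nat) list" where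
  "edges_from n s = concat (map (\<lambda>i. map (\<lambda>j. (i, j)) [Suc i..<n+1]) [s..<n+1])"

lemma edges_from_Suc:
  "s \<le> n \<Longrightarrow> edges_from n s = map (\<lambda>j. (s, j)) [Suc s..<n+1] @ edges_from n (Suc s)"
  by (simp add: edges_from_def upt_conv_Cons)

lemma nth_edges_from:
  assumes "s \<le> i" "i < j" "j \<le> n"
  shows "(\<Sum>t\<in>{s..<i}. n - t) + (j - i - 1) < length (edges_from n s) \<and>
    edges_from n s ! ((\<Sum>t\<in>{s..<i}. n - t) + (j - i - 1)) = (i, j)"
  using assms
proof (induction "i - s" arbitrary: s)
  case 0
  then have "s = i" by simp
  have "edges_from n s = map (\<lambda>j. (s, j)) [Suc s..<n+1] @ edges_from n (Suc s)"
    using 0 by (intro edges_from_Suc) simp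
  moreover have "j - i - 1 < length (map (\<lambda>j. (s, j)) [Suc s..<n+1])"
    using 0 \<open>s = i\<close> by (simp del: upt_Suc)
  ultimately show ?case using 0 \<open>s = i\<close> by (simp add: nth_append del: upt_Suc)
next
  case (Suc d)
  then have "s < i" "s \<le> n" by auto
  have "edges_from n s = map (\<lambda>j. (s, j)) [Suc s..<n+1] @ edges_from n (Suc s)"
    using \<open>s \<le> n\<close> by (rule edges_from_Suc)
  moreover have "(\<Sum>t\<in>{s..<i}. n - t) = (n - s) + (\<Sum>t\<in>{Suc s..<i}. n - t)"
    using \<open>s < i\<close> by (simp add: sum.atLeast_Suc_lessThan)
  moreover have "(\<Sum>t\<in>{Suc s..<i}. n - t) + (j - i - 1) < length (edges_from n (Suc s)) \<and>
      edges_from n (Suc s) ! ((\<Sum>t\<in>{Suc s..<i}. n - t) + (j - i - 1)) = (i, j)"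
    using Suc by (intro Suc.hyps) auto
  moreover have "length (map (\<lambda>j. (s, j)) [Suc s..<n+1]) = n - s" by (simp del: upt_Suc)
  ultimately show ?case by (simp add: nth_append add.assoc del: upt_Suc)
qed

lemma length_edge_list: "length (edge_list n) = n * (n - 1) div 2"
proof -
  have "length (edge_list n) = (\<Sum>i\<leftarrow>[1..<n+1]. n - i)"
    by (simp add: edge_list_def length_concat comp_def del: upt_Suc)
  also have "\<dots> = (\<Sum>i\<in>{Suc 0..n}. n - i)"
    by (simp add: sum_set_upt_conv_sum_list_nat[symmetric] atLeastLessThanSuc_atLeastAtMost
        del: upt_Suc)
  also have "\<dots> = (\<Sum>i\<in>{0..<n}. i)"
    using sum.atLeastLessThan_rev_at_least_Suc_atMost[of "\<lambda>i. i" 0 n] by simp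
  also have "\<dots> = n * (n - 1) div 2" by (simp add: Sum_Ico_nat)
  finally show ?thesis .
qed

lemma nth_edge_list_edge_index:
  assumes "u \<in> {1..n}" "v \<in> {1..n}" "u \<noteq> v"
  shows "edge_index n u v < n * (n - 1) div 2 \<and> edge_list n ! edge_index n u v = (min u v, max u v)"
proof -
  have "(\<Sum>t<min u v - 1. n - Suc t) = (\<Sum>t\<in>{1..<min u v}. n - t)"
    using assms sum.shift_bounds_Suc_ivl[of "\<lambda>t. n - t" 0 "min u v - 1"]
    by (simp add: atLeast0LessThan)
  then have "edge_index n u v = (\<Sum>t\<in>{1..<min u v}. n - t) + (max u v - min u v - 1)"
    by (simp add: edge_index_def)
  moreover have "edge_list n = edges_from n 1" by (simp add: edge_list_def edges_from_def)
  ultimately show ?thesis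
    using nth_edges_from[of 1 "min u v" "max u v" n] assms length_edge_list[of n]
    by (auto simp: min_def max_def)
qed

lemma edge_index_inj:
  assumes "u \<in> {1..n}" "v \<in> {1..n}" "u \<noteq> v" "u' \<in> {1..n}" "v' \<in> {1..n}" "u' \<noteq> v'"
    and "edge_index n u v = edge_index n u' v'"
  shows "{u, v} = {u', v'}"
proof -
  have "(min u v, max u v) = edge_list n ! edge_index n u v"
    using nth_edge_list_edge_index[of u n v] assms(1-3) by simp
  also have "\<dots> = (min u' v', max u' v')"
    using nth_edge_list_edge_index[of u' n v'] assms(4-7) by simp
  finally have "{min u v, max u v} = {min u' v', max u' v'}" by simp
  moreover have "{u, v} = {min u v, max u v}" "{u', v'} = {min u' v', max u' v'}"
    by (auto simp: min_def max_def)
  ultimately show ?thesis by simp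
qed

lemma length_E: "length (E n G) = n * (n - 1) div 2"
  by (simp add: E_def length_edge_list)

lemma nth_E_edge_index:
  assumes "u \<in> {1..n}" "v \<in> {1..n}" "u \<noteq> v"
  shows "E n G ! edge_index n u v \<longleftrightarrow> {u, v} \<in> G"
proof -
  have "{min u v, max u v} = {u, v}" by (auto simp: min_def max_def)
  with nth_edge_list_edge_index[OF assms] show ?thesis by (simp add: E_def length_edge_list)
qed

lemma inj_on_edge_index:
  assumes "a \<in> {1..n}" "W \<subseteq> {1..n} - {a}"
  shows "inj_on (edge_index n a) W"
proof (rule inj_onI)
  fix x y assume "x \<in> W" "y \<in> W" and eq: "edge_index n a x = edge_index n a y"
  with assms have "x \<in> {1..n}" "y \<in> {1..n}" "a \<noteq> x" "a \<noteq> y" by auto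
  with edge_index_inj[OF assms(1) _ _ assms(1) _ _ eq] have "{a, x} = {a, y}" by blast
  with \<open>a \<noteq> x\<close> show "x = y" by (auto simp: doubleton_eq_iff)
qed

lemma edge_index_images_disjoint:
  assumes "u \<in> {1..n}" "v \<in> {1..n}" "u \<noteq> v" "W \<subseteq> {1..n} - {u, v}"
  shows "edge_index n u ` W \<inter> edge_index n v ` W = {}"
proof (rule ccontr)
  assume "edge_index n u ` W \<inter> edge_index n v ` W \<noteq> {}"
  then obtain x y where "x \<in> W" "y \<in> W" and eq: "edge_index n u x = edge_index n v y" by blast
  with assms have "x \<in> {1..n}" "y \<in> {1..n}" "u \<noteq> x" "v \<noteq> y" "u \<noteq> y" by auto
  with edge_index_inj[OF assms(1) _ _ assms(2) _ _ eq] have "{u, x} = {v, y}" by blast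
  with \<open>u \<noteq> v\<close> \<open>u \<noteq> y\<close> show False by (auto simp: doubleton_eq_iff)
qed

definition graph_code :: "nat \<Rightarrow> nat set set \<Rightarrow> nat" where
  "graph_code n G = horner_sum of_bool 2 (E n G)"

lemma graph_code_less: "graph_code n G < 2 ^ (n * (n - 1) div 2)"
  using horner_sum_bound[of "E n G"] by (simp add: graph_code_def length_E)

lemma graph_code_complete:
  assumes "\<And>i j. 1 \<le> i \<Longrightarrow> i < j \<Longrightarrow> j \<le> n \<Longrightarrow> {i, j} \<in> G"
  shows "graph_code n G = 2 ^ (n * (n - 1) div 2) - 1"
proof -
  have "\<forall>k<length (E n G). E n G ! k"
  proof (intro allI impI)
    fix k assume "k < length (E n G)"
    then have "edge_list n ! k \<in> set (edge_list n)" by (simp add: E_def)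
    then obtain i j where "edge_list n ! k = (i, j)" "1 \<le> i" "i < j" "j \<le> n"
      by (auto simp: edge_list_def)
    with \<open>k < length (E n G)\<close> assms show "E n G ! k" by (simp add: E_def)
  qed
  then show ?thesis by (simp add: graph_code_def horner_sum_all_True length_E)
qed

definition adj_code :: "nat \<Rightarrow> nat \<Rightarrow> nat \<Rightarrow> nat \<Rightarrow> bool" where
  "adj_code n m u v \<longleftrightarrow> u \<noteq> v \<and> bit m (edge_index n u v)"

lemma adj_code_graph_code:
  assumes "u \<in> {1..n}" "v \<in> {1..n}"
  shows "adj_code n (graph_code n G) u v \<longleftrightarrow> u \<noteq> v \<and> {u, v} \<in> G"
  using nth_edge_list_edge_index[OF assms] nth_E_edge_index[OF assms]
  by (auto simp: adj_code_def graph_code_def bit_horner_sum_bit_iff length_E)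

lemma computable_edge_index:
  "computable k n \<Longrightarrow> computable k u \<Longrightarrow> computable k v \<Longrightarrow>
    computable k (\<lambda>xs. edge_index (n xs) (u xs) (v xs))"
proof -
  have min_max: "computable 3 (\<lambda>xs. min (xs!1) (xs!2))" "computable 3 (\<lambda>xs. max (xs!1) (xs!2))"
    unfolding min_def max_def by (intro computable_If decidable_le computable_proj; simp)+
  have "computable 4 (\<lambda>ys. ys!1 - Suc (ys!0))"
    by (intro computable_diff computable_Suc computable_proj) simp_all
  moreover have "computable 3 (\<lambda>xs. min (xs!1) (xs!2) - 1)"
    by (intro computable_diff computable_const min_max)
  ultimately have "computable 3 (\<lambda>xs. \<Sum>t<min (xs!1) (xs!2) - 1. xs!0 - Suc t)"
    by (rule computable_sum) simp_all
  then have "computable 3 (\<lambda>xs. edge_index (xs!0) (xs!1) (xs!2))"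
    unfolding edge_index_def
    by (intro computable_add computable_diff computable_const min_max)
  then show "computable k n \<Longrightarrow> computable k u \<Longrightarrow> computable k v \<Longrightarrow>
      computable k (\<lambda>xs. edge_index (n xs) (u xs) (v xs))"
    by (rule computable_comp3)
qed

lemma decidable_adj_code:
  "computable k n \<Longrightarrow> computable k m \<Longrightarrow> computable k u \<Longrightarrow> computable k v \<Longrightarrow>
    decidable k (\<lambda>xs. adj_code (n xs) (m xs) (u xs) (v xs))"
  unfolding adj_code_def
  by (intro decidable_conj decidable_not decidable_eq decidable_bit computable_edge_index)

section \<open>Graphs of diameter two\<close>

lemma gdist_le_walk: "walk n G xs \<Longrightarrow> gdist n G (hd xs) (last xs) \<le> enat (length xs - 1)"
  unfolding gdist_def by (rule INF_lower) (auto simp: walk_def)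

lemma two_le_gdist:
  assumes "u \<noteq> v" "{u, v} \<notin> G"
  shows "2 \<le> gdist n G u v"
  unfolding gdist_def
proof (rule INF_greatest)
  fix k assume "k \<in> {k. \<exists>xs. walk n G xs \<and> hd xs = u \<and> last xs = v \<and> length xs = Suc k}"
  then obtain xs where xs: "walk n G xs" "hd xs = u" "last xs = v" "length xs = Suc k" by blast
  have "k \<noteq> 0"
  proof
    assume "k = 0"
    then obtain a where "xs = [a]" using xs(4) by (cases xs) auto
    with xs assms show False by simp
  qed
  moreover have "k \<noteq> 1"
  proof
    assume "k = 1"
    then obtain a b where ab: "xs = [a, b]" using xs(4) by (cases xs; cases "tl xs") auto
    then have "{a, b} \<in> G" using xs(1) unfolding walk_def by (auto dest: spec[of _ 0])
    with ab xs assms show False by simp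
  qed
  ultimately show "2 \<le> enat k" by (simp add: numeral_eq_enat)
qed

lemma diameter_eq_2I:
  assumes common: "\<And>u v. u \<in> {1..n} \<Longrightarrow> v \<in> {1..n} \<Longrightarrow> u \<noteq> v \<Longrightarrow>
      \<exists>w\<in>{1..n}. {u, w} \<in> G \<and> {w, v} \<in> G"
    and nonedge: "i \<in> {1..n}" "j \<in> {1..n}" "i \<noteq> j" "{i, j} \<notin> G"
  shows "diameter n G = 2"
proof -
  have "gdist n G u v \<le> 2" if uv: "u \<in> {1..n}" "v \<in> {1..n}" for u v
  proof (cases "u = v")
    case True
    with uv have "walk n G [u]" by (simp add: walk_def)
    from gdist_le_walk[OF this] True show ?thesis by (simp add: zero_enat_def[symmetric])
  next
    case False
    then obtain w where "w \<in> {1..n}" "{u, w} \<in> G" "{w, v} \<in> G" using common uv by blast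
    with uv have "walk n G [u, w, v]" by (auto simp: walk_def less_Suc_eq)
    from gdist_le_walk[OF this] show ?thesis by (simp add: numeral_eq_enat eval_nat_numeral)
  qed
  then have "diameter n G \<le> 2" unfolding diameter_def by (intro SUP_least)
  moreover have "2 \<le> diameter n G"
    unfolding diameter_def using nonedge two_le_gdist[of i j G n]
    by (blast intro: SUP_upper2)
  ultimately show ?thesis by (rule antisym)
qed

definition no_common_neighbour :: "nat \<Rightarrow> nat \<Rightarrow> nat \<Rightarrow> nat \<Rightarrow> bool" where
  "no_common_neighbour n m u v \<longleftrightarrow> (\<forall>w<Suc n. 1 \<le> w \<longrightarrow> \<not> (adj_code n m u w \<and> adj_code n m v w))"

(* 2 ^ N - 1 is the code of the complete graph, whose diameter is 1. *)
definition bad_code :: "nat \<Rightarrow> nat \<Rightarrow> bool" where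
  "bad_code n m \<longleftrightarrow> m = 2 ^ (n * (n - 1) div 2) - 1 \<or>
     (\<exists>v<Suc n. \<exists>u<v. 1 \<le> u \<and> no_common_neighbour n m u v)"

lemma decidable_no_common_neighbour:
  assumes "computable k n" "computable k m" "computable k u" "computable k v"
  shows "decidable k (\<lambda>xs. no_common_neighbour (n xs) (m xs) (u xs) (v xs))"
  unfolding no_common_neighbour_def
proof (rule decidable_ball[where Q = "\<lambda>ys. 1 \<le> ys!0 \<longrightarrow>
    \<not> (adj_code (n (tl ys)) (m (tl ys)) (u (tl ys)) (ys!0) \<and>
       adj_code (n (tl ys)) (m (tl ys)) (v (tl ys)) (ys!0))"])
  show "decidable (Suc k) (\<lambda>ys. 1 \<le> ys!0 \<longrightarrow>
      \<not> (adj_code (n (tl ys)) (m (tl ys)) (u (tl ys)) (ys!0) \<and>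
         adj_code (n (tl ys)) (m (tl ys)) (v (tl ys)) (ys!0)))"
    using assms
    by (intro decidable_imp decidable_not decidable_conj decidable_le decidable_adj_code
        computable_tl computable_proj computable_const) simp_all
qed (use assms in \<open>simp_all add: computable_Suc\<close>)

lemma decidable_bad_code: "decidable 2 (\<lambda>xs. bad_code (xs!0) (xs!1))"
proof -
  have "decidable 4 (\<lambda>zs. 1 \<le> zs!0 \<and> no_common_neighbour (zs!2) (zs!3) (zs!0) (zs!1))"
    by (intro decidable_conj decidable_le decidable_no_common_neighbour computable_proj
        computable_const) simp_all
  then have "decidable 3 (\<lambda>ys. \<exists>u<ys!0. 1 \<le> u \<and> no_common_neighbour (ys!1) (ys!2) u (ys!0))"
    by (rule decidable_bex) (simp_all add: computable_proj)
  then have "decidable 2 (\<lambda>xs. \<exists>v<Suc (xs!0). \<exists>u<v. 1 \<le> u \<and> no_common_neighbour (xs!0) (xs!1) u v)"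
    by (rule decidable_bex) (simp_all add: computable_Suc computable_proj)
  moreover have "decidable 2 (\<lambda>xs. xs!1 = 2 ^ (xs!0 * (xs!0 - 1) div 2) - 1)"
    by (intro decidable_eq computable_diff computable_pow2 computable_div computable_mult
        computable_proj computable_const) simp_all
  ultimately show ?thesis
    unfolding bad_code_def by (rule decidable_disj[rotated])
qed

lemma diameter_eq_2_if_not_bad_code:
  assumes "\<not> bad_code n (graph_code n G)"
  shows "diameter n G = 2"
proof -
  let ?m = "graph_code n G"
  have "?m \<noteq> 2 ^ (n * (n - 1) div 2) - 1" using assms by (simp add: bad_code_def)
  then obtain i j where ij: "1 \<le> i" "i < j" "j \<le> n" "{i, j} \<notin> G"
    using graph_code_complete[of n G] by blast
  show ?thesis
  proof (rule diameter_eq_2I[where i = i and j = j])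
    fix u v assume uv: "u \<in> {1..n}" "v \<in> {1..n}" "u \<noteq> v"
    have "max u v < Suc n" "min u v < max u v" "1 \<le> min u v" using uv by auto
    then have "\<not> no_common_neighbour n ?m (min u v) (max u v)"
      using assms unfolding bad_code_def by blast
    then obtain w where w: "w \<in> {1..n}" "adj_code n ?m (min u v) w" "adj_code n ?m (max u v) w"
      unfolding no_common_neighbour_def by (auto simp: less_Suc_eq_le)
    have "min u v \<in> {1..n}" "max u v \<in> {1..n}" using uv by auto
    with w have "{min u v, w} \<in> G" "{max u v, w} \<in> G" by (simp_all add: adj_code_graph_code)
    then have "{u, w} \<in> G" "{w, v} \<in> G" by (cases "u \<le> v"; simp add: min_def max_def insert_commute)+
    with w show "\<exists>w\<in>{1..n}. {u, w} \<in> G \<and> {w, v} \<in> G" by blast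
  qed (use ij in auto)
qed

section \<open>Counting bad codes\<close>

lemma card_bits_avoiding_pairs:
  fixes f g :: "'a \<Rightarrow> nat"
  assumes W: "finite W" and inj: "inj_on f W" "inj_on g W"
    and disj: "f ` W \<inter> g ` W = {}" and range: "f ` W \<union> g ` W \<subseteq> {..<N}"
  shows "card {m::nat. m < 2 ^ N \<and> (\<forall>w\<in>W. \<not> (bit m (f w) \<and> bit m (g w)))}
    \<le> 2 ^ (N - 2 * card W) * 3 ^ card W"
proof -
  define S where "S = {m::nat. m < 2 ^ N \<and> (\<forall>w\<in>W. \<not> (bit m (f w) \<and> bit m (g w)))}"
  define R where "R = {..<N} - (f ` W \<union> g ` W)"
  define Pairs :: "(bool \<times> bool) set" where "Pairs = {(False, False), (False, True), (True, False)}"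
  define \<phi> where "\<phi> m = (restrict (bit m) R, restrict (\<lambda>w. (bit m (f w), bit m (g w))) W)" for m :: nat
  have "card (f ` W \<union> g ` W) = 2 * card W"
    using card_Un_disjoint[OF finite_imageI[OF W] finite_imageI[OF W] disj] inj
    by (simp add: card_image)
  then have card_R: "card R = N - 2 * card W"
    unfolding R_def using card_Diff_subset[OF _ range] W by simp
  have "inj_on \<phi> S"
  proof (rule inj_onI)
    fix m m' assume m: "m \<in> S" "m' \<in> S" and eq: "\<phi> m = \<phi> m'"
    have on_R: "bit m i = bit m' i" if "i \<in> R" for i
      using fun_cong[OF arg_cong[OF eq, of fst], of i] that by (simp add: \<phi>_def)
    have on_W: "bit m (f w) = bit m' (f w) \<and> bit m (g w) = bit m' (g w)" if "w \<in> W" for w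
      using fun_cong[OF arg_cong[OF eq, of snd], of w] that by (simp add: \<phi>_def)
    have "\<forall>i<N. bit m i = bit m' i"
    proof (intro allI impI)
      fix i assume "i < N"
      then consider "i \<in> R" | w where "w \<in> W" "i = f w \<or> i = g w" unfolding R_def by auto
      then show "bit m i = bit m' i" using on_R on_W by cases auto
    qed
    with m show "m = m'" unfolding S_def by (blast intro: nat_eq_if_bits_eq)
  qed
  moreover have "\<phi> ` S \<subseteq> (R \<rightarrow>\<^sub>E UNIV) \<times> (W \<rightarrow>\<^sub>E Pairs)"
    unfolding S_def \<phi>_def Pairs_def by auto
  moreover have "finite ((R \<rightarrow>\<^sub>E (UNIV :: bool set)) \<times> (W \<rightarrow>\<^sub>E Pairs))"
    unfolding R_def Pairs_def using W by (intro finite_cartesian_product finite_PiE) auto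
  ultimately have "card S \<le> card ((R \<rightarrow>\<^sub>E (UNIV :: bool set)) \<times> (W \<rightarrow>\<^sub>E Pairs))"
    by (rule card_inj_on_le)
  also have "\<dots> = 2 ^ (N - 2 * card W) * 3 ^ card W"
    using W card_R by (simp add: card_cartesian_product card_PiE R_def Pairs_def numeral_3_eq_3)
  finally show ?thesis unfolding S_def .
qed

lemma card_no_common_neighbour_codes:
  assumes "1 \<le> u" "u < v" "v \<le> n"
  shows "card {m. m < 2 ^ (n * (n - 1) div 2) \<and> no_common_neighbour n m u v}
    \<le> 2 ^ (n * (n - 1) div 2 - 2 * (n - 2)) * 3 ^ (n - 2)"
proof -
  define N where "N = n * (n - 1) div 2"
  define W where "W = {1..n} - {u, v}"
  have u: "u \<in> {1..n}" and v: "v \<in> {1..n}" and W: "W \<subseteq> {1..n} - {u, v}"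
    using assms by (auto simp: W_def)
  have "edge_index n a w < N" if "a \<in> {u, v}" "w \<in> W" for a w
  proof -
    have "w \<in> {1..n}" "a \<noteq> w" using that W by auto
    with that u v nth_edge_list_edge_index[of a n w] show ?thesis unfolding N_def by auto
  qed
  then have range: "edge_index n u ` W \<union> edge_index n v ` W \<subseteq> {..<N}" by auto
  have "{m. m < 2 ^ N \<and> no_common_neighbour n m u v} \<subseteq>
      {m. m < 2 ^ N \<and> (\<forall>w\<in>W. \<not> (bit m (edge_index n u w) \<and> bit m (edge_index n v w)))}"
    by (auto simp: W_def no_common_neighbour_def adj_code_def less_Suc_eq_le)
  then have "card {m. m < 2 ^ N \<and> no_common_neighbour n m u v} \<le>
      card {m::nat. m < 2 ^ N \<and> (\<forall>w\<in>W. \<not> (bit m (edge_index n u w) \<and> bit m (edge_index n v w)))}"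
    by (rule card_mono[rotated]) simp
  also have "\<dots> \<le> 2 ^ (N - 2 * card W) * 3 ^ card W"
    using W u v by (intro card_bits_avoiding_pairs inj_on_edge_index edge_index_images_disjoint range)
      (use assms in \<open>auto simp: W_def\<close>)
  also have "card W = n - 2" using assms by (simp add: W_def card_Diff_subset)
  finally show ?thesis unfolding N_def .
qed

definition bad_codes :: "nat \<Rightarrow> nat set" where
  "bad_codes n = {m. m < 2 ^ (n * (n - 1) div 2) \<and> bad_code n m}"

lemma card_bad_codes_pos: "bad_code n (graph_code n G) \<Longrightarrow> 0 < card (bad_codes n)"
  using graph_code_less[of n G] by (auto simp: bad_codes_def card_gt_0_iff)

lemma card_bad_codes:
  "card (bad_codes n) \<le> 1 + n\<^sup>2 * (2 ^ (n * (n - 1) div 2 - 2 * (n - 2)) * 3 ^ (n - 2))"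
proof -
  define N where "N = n * (n - 1) div 2"
  define K :: nat where "K = 2 ^ (N - 2 * (n - 2)) * 3 ^ (n - 2)"
  define Pairs where "Pairs = {(u, v) \<in> {1..n} \<times> {1..n}. u < v}"
  define C where "C u v = {m. m < 2 ^ N \<and> no_common_neighbour n m u v}" for u v
  have fin_Pairs: "finite Pairs" unfolding Pairs_def by (rule finite_subset[of _ "{1..n} \<times> {1..n}"]) auto
  have "bad_codes n \<subseteq> {2 ^ N - 1} \<union> (\<Union>(u, v)\<in>Pairs. C u v)"
    by (auto simp: bad_codes_def bad_code_def Pairs_def C_def N_def)
  moreover have "finite ({2 ^ N - 1} \<union> (\<Union>(u, v)\<in>Pairs. C u v))"
    using fin_Pairs by (auto simp: C_def)
  ultimately have "card (bad_codes n) \<le> card ({2 ^ N - 1} \<union> (\<Union>(u, v)\<in>Pairs. C u v))"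
    by (rule card_mono[rotated])
  also have "\<dots> \<le> 1 + card (\<Union>(u, v)\<in>Pairs. C u v)"
    using card_Un_le[of "{2 ^ N - 1 :: nat}"] by simp
  also have "\<dots> \<le> 1 + (\<Sum>(u, v)\<in>Pairs. card (C u v))"
    using card_UN_le[OF fin_Pairs, of "\<lambda>(u, v). C u v"] by (simp add: split_def)
  also have "\<dots> \<le> 1 + card Pairs * K"
    using sum_bounded_above[of Pairs "\<lambda>(u, v). card (C u v)" K] card_no_common_neighbour_codes
    by (force simp: Pairs_def C_def K_def N_def)
  also have "card Pairs \<le> card ({1..n} \<times> {1..n})"
    unfolding Pairs_def by (rule card_mono) auto
  also have "\<dots> = n\<^sup>2" by (simp add: power2_eq_square)
  finally show ?thesis unfolding K_def N_def by (simp add: mult_right_mono)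
qed

section \<open>Description of a string by its rank\<close>

lemma computable_triangle: "computable k a \<Longrightarrow> computable k (\<lambda>xs. triangle (a xs))"
  unfolding triangle_def by (rule computable_div[OF computable_mult[OF _ computable_Suc] computable_const])

lemma fst_prod_decode: "fst (prod_decode y) = y - triangle (LEAST s. y < triangle (Suc s))"
proof -
  obtain a b where ab: "prod_decode y = (a, b)" by fastforce
  then have y: "y = triangle (a + b) + a"
    using prod_decode_inverse[of y] by (simp add: prod_encode_def)
  have "(LEAST s. y < triangle (Suc s)) = a + b"
  proof (rule Least_equality)
    show "y < triangle (Suc (a + b))" using y by simp
    fix s assume "y < triangle (Suc s)"
    show "a + b \<le> s"
    proof (rule ccontr)
      assume "\<not> a + b \<le> s"
      then have "triangle (Suc s) \<le> triangle (a + b)"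
        unfolding triangle_def by (intro div_le_mono mult_le_mono) auto
      with \<open>y < triangle (Suc s)\<close> y show False by simp
    qed
  qed
  then show ?thesis using y ab by simp
qed

lemma computable_fst_prod_decode:
  "computable k a \<Longrightarrow> computable k (\<lambda>xs. fst (prod_decode (a xs)))"
proof -
  have "decidable 2 (\<lambda>ys. ys!1 < triangle (Suc (ys!0)))"
    by (intro decidable_less computable_triangle computable_Suc computable_proj) simp_all
  then have "computable 1 (\<lambda>xs. LEAST s. xs!0 < triangle (Suc s))"
  proof (rule computable_Least)
    show "\<exists>s. xs!0 < triangle (Suc s)" for xs :: "nat list"
      by (rule exI[of _ "xs!0"]) (simp add: triangle_def)
  qed simp_all
  then have "computable 1 (\<lambda>xs. xs!0 - triangle (LEAST s. xs!0 < triangle (Suc s)))"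
    by (intro computable_diff computable_triangle computable_proj) simp_all
  then have "computable 1 (\<lambda>xs. fst (prod_decode (xs!0)))"
    by (simp add: fst_prod_decode)
  then show "computable k a \<Longrightarrow> computable k (\<lambda>xs. fst (prod_decode (a xs)))"
    by (rule computable_comp1)
qed

lemma card_less_eq_sum:
  fixes t :: nat
  shows "card {m. m < t \<and> P m} = (\<Sum>m<t. if P m then 1 else 0)"
proof (induction t)
  case (Suc t)
  have "{m. m < Suc t \<and> P m} = (if P t then insert t else id) {m. m < t \<and> P m}"
    by (auto simp: less_Suc_eq)
  with Suc show ?case by simp
qed simp

lemma computable_card_less:
  assumes "decidable 2 (\<lambda>xs. P (xs!0) (xs!1))"
  shows "computable 2 (\<lambda>xs. card {m. m < xs!1 \<and> P (xs!0) m})"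
proof -
  have "computable 3 (\<lambda>ys. if P (ys!1) (ys!0) then 1 else 0)"
    using computable_comp2[OF assms[unfolded decidable_def]] computable_proj by simp
  then have "computable 2 (\<lambda>xs. \<Sum>m<xs!1. if P (xs!0) m then 1 else 0)"
    by (rule computable_sum) (simp_all add: computable_proj)
  then show ?thesis by (simp add: card_less_eq_sum)
qed

lemma Least_rank_eq:
  fixes m B :: nat
  assumes "P m" "m < B"
  shows "(LEAST z. card {k. k < m \<and> P k} < card {k. k < Suc z \<and> P k} \<or> B \<le> z) = m"
proof (rule Least_equality)
  have "{k. k < Suc m \<and> P k} = insert m {k. k < m \<and> P k}"
    using assms(1) by (auto simp: less_Suc_eq)
  then show "card {k. k < m \<and> P k} < card {k. k < Suc m \<and> P k} \<or> B \<le> m" by simp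
next
  fix z assume z: "card {k. k < m \<and> P k} < card {k. k < Suc z \<and> P k} \<or> B \<le> z"
  show "m \<le> z"
  proof (rule ccontr)
    assume "\<not> m \<le> z"
    then have "card {k. k < Suc z \<and> P k} \<le> card {k. k < m \<and> P k}" by (intro card_mono) auto
    with z assms(2) \<open>\<not> m \<le> z\<close> show False by linarith
  qed
qed

(* Given the rank a of a code, the decoder recovers n from y = prod_encode (n, d) and searches
   for the least z such that {0..z} contains more than a codes of the family; the bound
   2 ^ len n only serves to make the search total. *)
definition rank_decode :: "(nat \<Rightarrow> nat \<Rightarrow> bool) \<Rightarrow> (nat \<Rightarrow> nat) \<Rightarrow> nat \<Rightarrow> nat \<Rightarrow> nat" where
  "rank_decode P len a y = 2 ^ len (fst (prod_decode y)) - 1 +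
     (LEAST z. a < card {m. m < Suc z \<and> P (fst (prod_decode y)) m} \<or> 2 ^ len (fst (prod_decode y)) \<le> z)"

lemma rank_decode_rank:
  assumes "length x = len n" "P n (horner_sum of_bool 2 x)"
  shows "rank_decode P len (card {m. m < horner_sum of_bool 2 x \<and> P n m}) (prod_encode (n, d)) = nat_of_bl x"
proof -
  have "horner_sum of_bool 2 x < (2::nat) ^ len n" using horner_sum_bound[of x] assms(1) by simp
  with assms show ?thesis by (simp add: rank_decode_def Least_rank_eq nat_of_bl_eq_horner_sum)
qed

lemma computable_rank_decode:
  assumes P: "decidable 2 (\<lambda>xs. P (xs!0) (xs!1))" and len: "computable 1 (\<lambda>xs. len (xs!0))"
  shows "computable 2 (\<lambda>xs. rank_decode P len (xs!0) (xs!1))"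
proof -
  have dec: "computable k (\<lambda>xs. fst (prod_decode (xs!i)))" if "i < k" for i k
    using that by (intro computable_fst_prod_decode computable_proj)
  have count: "computable k (\<lambda>xs. card {m. m < b xs \<and> P (a xs) m})"
    if "computable k a" "computable k b" for k a b
    using computable_comp2[OF computable_card_less[OF P] that] .
  have pow_len: "computable k (\<lambda>xs. 2 ^ len (a xs))" if "computable k a" for k a
    using computable_pow2[OF computable_comp1[OF len that]] .
  have "computable 2 (\<lambda>xs. LEAST z. xs!0 < card {m. m < Suc z \<and> P (fst (prod_decode (xs!1))) m} \<or>
      2 ^ len (fst (prod_decode (xs!1))) \<le> z)"
  proof (rule computable_Least[where Q = "\<lambda>ys. ys!1 < card {m. m < Suc (ys!0) \<and> P (fst (prod_decode (ys!2))) m} \<or>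
      2 ^ len (fst (prod_decode (ys!2))) \<le> ys!0"])
    show "decidable 3 (\<lambda>ys. ys!1 < card {m. m < Suc (ys!0) \<and> P (fst (prod_decode (ys!2))) m} \<or>
        2 ^ len (fst (prod_decode (ys!2))) \<le> ys!0)"
      by (intro decidable_disj decidable_less decidable_le count pow_len dec computable_Suc
          computable_proj) simp_all
  qed auto
  then show ?thesis
    unfolding rank_decode_def
    by (intro computable_add computable_diff pow_len dec computable_const) simp_all
qed

lemma KC_le_length: "outputs U q y x \<Longrightarrow> KC U x y \<le> length q"
  unfolding KC_def by (rule Least_le) blast

lemma KC_le_of_decidable:
  assumes U: "universal U"
    and P: "decidable 2 (\<lambda>xs. P (xs!0) (xs!1))" and len: "computable 1 (\<lambda>xs. len (xs!0))"
  shows "\<exists>c. \<forall>n d x L. length x = len n \<longrightarrow> P n (horner_sum of_bool 2 x) \<longrightarrow>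
    card {m. m < 2 ^ len n \<and> P n m} \<le> 2 ^ L \<longrightarrow> KC U x (prod_encode (n, d)) \<le> L + c"
proof -
  obtain M where M: "\<forall>xs. length xs = 2 \<longrightarrow> ev M xs (rank_decode P len (xs!0) (xs!1))"
    using computable_rank_decode[OF P len] unfolding computable_def ..
  obtain c where c: "\<forall>p y x. outputs M p y x \<longrightarrow> (\<exists>q. outputs U q y x \<and> length q \<le> length p + c)"
    using U unfolding universal_def by (elim allE[of _ M]) (rule exE)
  show ?thesis
  proof (intro exI[of _ c] allI impI)
    fix n d x L
    let ?m = "horner_sum of_bool 2 x :: nat"
    assume x: "length x = len n" "P n ?m" and card: "card {m. m < 2 ^ len n \<and> P n m} \<le> 2 ^ L"
    have "?m < 2 ^ len n" using horner_sum_bound[of x] x(1) by simp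
    with x(2) have "{m. m < ?m \<and> P n m} \<subset> {m. m < 2 ^ len n \<and> P n m}" by auto
    then have "card {m. m < ?m \<and> P n m} < card {m. m < 2 ^ len n \<and> P n m}"
      by (rule psubset_card_mono[rotated]) simp
    with card have "card {m. m < ?m \<and> P n m} < 2 ^ L" by linarith
    then obtain p where p: "nat_of_bl p = card {m. m < ?m \<and> P n m}" "length p \<le> L"
      using ex_nat_of_bl_eq by blast
    have "outputs M p (prod_encode (n, d)) x"
      using M[rule_format, of "[nat_of_bl p, prod_encode (n, d)]"] rank_decode_rank[where P = P and len = len, OF x]
      by (simp add: outputs_def p)
    then obtain q where q: "outputs U q (prod_encode (n, d)) x" "length q \<le> length p + c"
      using c by blast
    have "KC U x (prod_encode (n, d)) \<le> length q" using q(1) by (rule KC_le_length)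
    with q(2) p(2) show "KC U x (prod_encode (n, d)) \<le> L + c" by linarith
  qed
qed

lemma KC_graph_code_le:
  assumes "universal U"
  shows "\<exists>c. \<forall>n d G L. bad_code n (graph_code n G) \<longrightarrow> card (bad_codes n) \<le> 2 ^ L \<longrightarrow>
    KC U (E n G) (prod_encode (n, d)) \<le> L + c"
proof -
  have "computable 1 (\<lambda>xs. xs!0 * (xs!0 - 1) div 2)"
    by (intro computable_div computable_mult computable_diff computable_proj computable_const) simp_all
  from KC_le_of_decidable[OF assms decidable_bad_code this] obtain c
    where "\<forall>n d x L. length x = n * (n - 1) div 2 \<longrightarrow> bad_code n (horner_sum of_bool 2 x) \<longrightarrow>
      card {m. m < 2 ^ (n * (n - 1) div 2) \<and> bad_code n m} \<le> 2 ^ L \<longrightarrow>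
      KC U x (prod_encode (n, d)) \<le> L + c" ..
  then show ?thesis
    unfolding graph_code_def bad_codes_def by (intro exI[of _ c]) (simp add: length_E)
qed

section \<open>Asymptotics\<close>

lemma real_edge_count: "real (n * (n - 1) div 2) = real n * (real n - 1) / 2"
proof -
  have "even (n * (n - 1))" by (cases "even n") auto
  then show ?thesis by (cases n) (simp_all add: real_of_nat_div algebra_simps)
qed

lemma real_bad_code_bound:
  assumes "4 \<le> n"
  shows "real (1 + n\<^sup>2 * (2 ^ (n * (n - 1) div 2 - 2 * (n - 2)) * 3 ^ (n - 2))) =
    2 ^ (n * (n - 1) div 2) * (2 powr (- (real n * (real n - 1) / 2)) + 16/9 * real n ^ 2 * (3/4) ^ n)"
proof -
  define N where "N = n * (n - 1) div 2"
  have "4 * (n - 2) \<le> n * (n - 1)" using assms by (intro mult_le_mono) auto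
  then have "2 * (n - 2) \<le> N" unfolding N_def by linarith
  then have "(2::real) ^ (N - 2 * (n - 2)) * 3 ^ (n - 2) = 2 ^ N * (3/4) ^ (n - 2)"
    by (simp add: power_diff power_mult power_divide field_simps)
  also have "(3/4::real) ^ (n - 2) = 16/9 * (3/4) ^ n"
    using assms by (simp add: power_diff power2_eq_square field_simps)
  finally have "(2::real) ^ (N - 2 * (n - 2)) * 3 ^ (n - 2) = 2 ^ N * (16/9 * (3/4) ^ n)" .
  moreover have "2 ^ N * 2 powr (- (real n * (real n - 1) / 2)) = 1"
    by (simp add: N_def real_edge_count[symmetric] powr_minus powr_realpow)
  ultimately show ?thesis unfolding N_def[symmetric] by (simp add: algebra_simps)
qed

(* Since (3/4) ^ 8 * 2 < 1, the factor 2 ^ (n / 8) allowed by delta n \<le> n / 8 is absorbed. *)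
lemma powr_three_quarters: "2 powr (real n / 8) * (3/4) ^ n = (6561/32768 :: real) powr (real n / 8)"
proof -
  have "(3/4::real) ^ n = ((3/4) powr 8) powr (real n / 8)"
    by (simp only: powr_powr) (simp add: powr_realpow)
  also have "(3/4::real) powr 8 = 6561/65536" by (simp add: powr_numeral power_divide)
  finally have "(3/4::real) ^ n = (6561/65536) powr (real n / 8)" .
  moreover have "(6561/32768 :: real) = 2 * (6561/65536)" by simp
  ultimately show ?thesis by (simp only: powr_mult)
qed

lemma card_bad_codes_mult_pow_le:
  assumes "4 \<le> n" "real d \<le> real n / 8"
    and small: "2 ^ c * (2 powr (real n / 8) * 2 powr (- (real n * (real n - 1) / 2)) +
      16/9 * real n ^ 2 * (6561/32768) powr (real n / 8)) \<le> 1"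
  shows "card (bad_codes n) * 2 ^ (d + c) \<le> 2 ^ (n * (n - 1) div 2)"
proof -
  define N where "N = n * (n - 1) div 2"
  define B where "B = 1 + n\<^sup>2 * (2 ^ (N - 2 * (n - 2)) * 3 ^ (n - 2))"
  have "(2::real) ^ (d + c) \<le> 2 ^ c * 2 powr (real n / 8)"
    using assms(2) by (simp add: power_add powr_realpow[symmetric])
  then have "real B * 2 ^ (d + c) \<le> real B * (2 ^ c * 2 powr (real n / 8))"
    by (rule mult_left_mono) simp
  also have "\<dots> = 2 ^ N * (2 ^ c * (2 powr (real n / 8) * 2 powr (- (real n * (real n - 1) / 2)) +
      16/9 * real n ^ 2 * (6561/32768) powr (real n / 8)))"
    unfolding B_def N_def real_bad_code_bound[OF assms(1)] powr_three_quarters[symmetric]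
    by (simp add: algebra_simps)
  also have "\<dots> \<le> 2 ^ N" using small by simp
  finally have "real (B * 2 ^ (d + c)) \<le> real (2 ^ N)" by simp
  then have "B * 2 ^ (d + c) \<le> 2 ^ N" by (simp only: of_nat_le_iff)
  with card_bad_codes[of n] show ?thesis
    unfolding B_def N_def by (meson le_trans mult_le_mono1)
qed

lemma eventually_card_bad_codes_le:
  fixes \<delta> :: "nat \<Rightarrow> nat"
  assumes "(\<lambda>n. real (\<delta> n)) \<in> o(\<lambda>n. real n)"
  shows "eventually (\<lambda>n. card (bad_codes n) * 2 ^ (\<delta> n + c) \<le> 2 ^ (n * (n - 1) div 2)) sequentially"
proof -
  have "(\<lambda>n. 2 powr (real n / 8) * 2 powr (- (real n * (real n - 1) / 2))) \<longlonglongrightarrow> 0"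
    by real_asymp
  moreover have "(\<lambda>n. 16/9 * real n ^ 2 * (6561/32768) powr (real n / 8)) \<longlonglongrightarrow> 0"
    by real_asymp
  ultimately have "(\<lambda>n. 2 ^ c * (2 powr (real n / 8) * 2 powr (- (real n * (real n - 1) / 2)) +
      16/9 * real n ^ 2 * (6561/32768) powr (real n / 8))) \<longlonglongrightarrow> 0"
    by (intro tendsto_mult_right_zero tendsto_add_zero)
  then have "eventually (\<lambda>n. 2 ^ c * (2 powr (real n / 8) * 2 powr (- (real n * (real n - 1) / 2)) +
      16/9 * real n ^ 2 * (6561/32768) powr (real n / 8)) < 1) sequentially"
    by (rule order_tendstoD) simp
  moreover have "eventually (\<lambda>n. real (\<delta> n) \<le> real n / 8) sequentially"
    using landau_o.smallD[OF assms, of "1/8"] by simp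
  moreover have "eventually (\<lambda>n. 4 \<le> n) sequentially" by (rule eventually_ge_at_top)
  ultimately show ?thesis
    by eventually_elim (rule card_bad_codes_mult_pow_le; simp)
qed

lemma le_pow2_diff:
  fixes a T N :: nat
  assumes "a * 2 ^ T \<le> 2 ^ N" "0 < a"
  shows "T \<le> N" "a \<le> 2 ^ (N - T)"
proof -
  have "(2::nat) ^ T \<le> 2 ^ N" using assms by (metis le_trans mult_le_mono1 mult_1 Suc_leI One_nat_def)
  then show "T \<le> N" by simp
  then have "a * 2 ^ T \<le> 2 ^ (N - T) * 2 ^ T" using assms(1) by (simp flip: power_add)
  then show "a \<le> 2 ^ (N - T)" by simp
qed

theorem lemma2:
  fixes \<delta> :: "nat \<Rightarrow> nat" and U :: recf
  assumes "universal U"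
    and "(\<lambda>n. real (\<delta> n)) \<in> o(\<lambda>n. real n)"
  shows "\<exists>n0. \<forall>n\<ge>n0. \<forall>G. graph_on n G \<and> random_graph n \<delta> U G \<longrightarrow> diameter n G = 2"
proof -
  obtain c where c: "\<And>n d G L. bad_code n (graph_code n G) \<Longrightarrow> card (bad_codes n) \<le> 2 ^ L \<Longrightarrow>
      KC U (E n G) (prod_encode (n, d)) \<le> L + c"
    using KC_graph_code_le[OF assms(1)] by blast
  obtain n0 where n0: "\<And>n. n0 \<le> n \<Longrightarrow> card (bad_codes n) * 2 ^ (\<delta> n + Suc c) \<le> 2 ^ (n * (n - 1) div 2)"
    using eventually_card_bad_codes_le[OF assms(2), of "Suc c"] unfolding eventually_sequentially by blast
  have "\<not> bad_code n (graph_code n G)" if "n0 \<le> n" "random_graph n \<delta> U G" for n G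
  proof
    define N where "N = n * (n - 1) div 2"
    assume bad: "bad_code n (graph_code n G)"
    with n0[OF \<open>n0 \<le> n\<close>] card_bad_codes_pos have "\<delta> n + Suc c \<le> N"
      and "card (bad_codes n) \<le> 2 ^ (N - (\<delta> n + Suc c))"
      using le_pow2_diff unfolding N_def by blast+
    with c[OF bad] have "KC U (E n G) (prod_encode (n, \<delta> n)) \<le> N - (\<delta> n + Suc c) + c" by blast
    with \<open>random_graph n \<delta> U G\<close> \<open>\<delta> n + Suc c \<le> N\<close> show False
      unfolding random_graph_def N_def by linarith
  qed
  then show ?thesis using diameter_eq_2_if_not_bad_code by blast
qed

end
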